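(* Let $x,y>0$ and $z\ge 0$ (the approximation is intended for the regime $z\ll x,y$). Let $a=(x+y)/2$ and $g=\sqrt{xy}$. Then $$R_G(x,y,z)=R_G(x,y,0)+\pi\theta z/8,$$ where $$\frac{1}{\sqrt a}\left(1-\frac4\pi\sqrt{\frac za}\right)<\theta<\left(\frac{2}{ag+g^2}\right)^{1/4}\le\frac1{\sqrt g},$$ with equality in the last inequality iff $x=y$.
   Context: For $x,y,z\ge0$ with at most one zero: $R_G(x,y,z)=\frac14\int_0^\infty[(t+x)(t+y)(t+z)]^{-1/2}\left(\frac{x}{t+x}+\frac{y}{t+y}+\frac{z}{t+z}\right)t\,dt$. *)

theory Defs
  imports "HOL-Analysis.Analysis"
begin

definition R_G :: "real \<Rightarrow> real \<Rightarrow> real \<Rightarrow> real" where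
  "R_G x y z = (1/4) * integral {0<..}
     (\<lambda>t. ((t + x) * (t + y) * (t + z)) powr (-1/2)
          * (x / (t + x) + y / (t + y) + z / (t + z)) * t)"

end

theory Submission
  imports Defs "HOL-Real_Asymp.Real_Asymp"
begin

(* The primitive 2 t^2 / sqrt ((t+x)(t+y)(t+w)) has derivative R_G-integrand + t / sqrt ((t+x)(t+y)(t+w)).
   Integrating by parts therefore turns 4 (R_G(x,y,z) - R_G(x,y,0)) = pi z theta / 2 into the integral of the
   positive kernel  t / sqrt ((t+x)(t+y)) * (1 / sqrt t - 1 / sqrt (t+z)),  where (t+x)(t+y) = t^2 + 2at + g^2.
   Since 0 < 1 / sqrt t - 1 / sqrt (t+z) < z / (2 t sqrt t), and since
   (t-g)^2 + 4ct <= (t+g) sqrt (t^2 + 2at + g^2) for c^2 = (ag + g^2)/2, the kernel lies strictly below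
   z (t+g) / (2 sqrt t ((t-g)^2 + 4ct)), whose arctan primitive gives the integral pi z / (2 sqrt c).
   Hence theta < c^(-1/2) = (2 / (ag + g^2))^(1/4), which is at most g^(-1/2) because g <= a.
   For the lower bound, sqrt (t^2 + 2at + g^2) <= t + a together with the tangent-line error of 1/sqrt
   yields a minorant with integral pi z / (2 sqrt a) - 4 z sqrt z / (3a). *)

lemma has_integral_greaterThan_0_FTC_nonneg:
  fixes f F :: "real \<Rightarrow> real"
  assumes "\<And>t. 0 < t \<Longrightarrow> (F has_real_derivative f t) (at t)"
    and "\<And>t. 0 < t \<Longrightarrow> isCont f t"
    and "\<And>t. 0 < t \<Longrightarrow> 0 \<le> f t"
    and "(F \<longlongrightarrow> A) (at_right 0)" and "(F \<longlongrightarrow> B) at_top"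
  shows "(f has_integral (B - A)) {0<..}"
proof -
  have "set_integrable lborel (einterval 0 \<infinity>) f" "(LBINT t=0..\<infinity>. f t) = B - A"
    by (rule interval_integral_FTC_nonneg[where F=F and A=A and B=B],
        auto simp: zero_ereal_def ereal_tendsto_simps assms)+
  then show ?thesis
    using interval_integral_to_infinity_eq[of lborel 0 f] set_borel_integral_eq_integral[of "{0<..}" f]
    by (simp add: zero_ereal_def has_integral_iff)
qed

lemma has_integral_greaterThan_0_FTC_integrable:
  fixes f F :: "real \<Rightarrow> real"
  assumes "\<And>t. 0 < t \<Longrightarrow> (F has_real_derivative f t) (at t)"
    and "continuous_on {0<..} f" and "f absolutely_integrable_on {0<..}"
    and "(F \<longlongrightarrow> A) (at_right 0)" and "(F \<longlongrightarrow> B) at_top"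
  shows "(f has_integral (B - A)) {0<..}"
proof -
  have "(\<lambda>t. indicator {0<..} t *\<^sub>R f t) \<in> borel_measurable lborel"
    using borel_measurable_continuous_on_indicator[OF _ assms(2)] by simp
  then have int: "set_integrable lborel {0<..} f"
    using assms(3) integrable_completion unfolding set_integrable_def by blast
  have "(LBINT t=0..\<infinity>. f t) = B - A"
    by (rule interval_integral_FTC_integrable[where F=F and A=A and B=B])
       (use assms int in \<open>auto simp: zero_ereal_def ereal_tendsto_simps continuous_on_eq_continuous_at
          has_real_derivative_iff_has_vector_derivative[symmetric]\<close>)
  then show ?thesis
    using interval_integral_to_infinity_eq[of lborel 0 f] set_borel_integral_eq_integral[OF int]
    by (simp add: zero_ereal_def has_integral_iff)
qed

lemma continuous_on_dominated_integrable_on: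
  fixes f g :: "real \<Rightarrow> real"
  assumes "continuous_on S f" "S \<in> sets lebesgue" "g integrable_on S"
    and "\<And>t. t \<in> S \<Longrightarrow> \<bar>f t\<bar> \<le> g t"
  shows "f integrable_on S"
  using measurable_bounded_by_integrable_imp_integrable[OF
      continuous_imp_measurable_on_sets_lebesgue[OF assms(1,2)] assms(3)] assms(2,4)
  by simp

lemma has_integral_strict_mono_greaterThan_0:
  fixes f g :: "real \<Rightarrow> real"
  assumes "(f has_integral I) {0<..}" "(g has_integral J) {0<..}"
    and "continuous_on {0<..} f" "continuous_on {0<..} g" and "\<And>t. 0 < t \<Longrightarrow> f t < g t"
  shows "I < J"
proof -
  define h where "h t = g t - f t" for t
  have h: "(h has_integral J - I) {0<..}"
    unfolding h_def by (rule has_integral_diff[OF assms(2,1)])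
  have "continuous_on {1..2} h"
    unfolding h_def using assms(3,4) by (intro continuous_intros) (auto elim: continuous_on_subset)
  then have "integral {1..2::real} (\<lambda>t. 0) < integral {1..2} h"
    by (intro integral_less_real) (auto simp: h_def assms(5))
  also have "integral {1..2} h \<le> integral {0<..} h"
    using h assms(5) by (intro integral_subset_le integrable_on_subinterval[of _ "{0<..}"])
      (auto simp: h_def less_imp_le has_integral_integrable)
  finally show ?thesis using h by (simp add: integral_unique)
qed

lemma inverse_sqrt_diff_bounds:
  fixes t z :: real
  assumes "0 < t" "0 < z"
  shows "0 < 1 / sqrt t - 1 / sqrt (t + z)" and "1 / sqrt t - 1 / sqrt (t + z) < z / (2 * t * sqrt t)"
proof -
  define s q where "s = sqrt t" and "q = sqrt (t + z)"
  have "0 < s" "s < q" using assms by (auto simp: s_def q_def)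
  have t: "t = s\<^sup>2" and tz: "t + z = q\<^sup>2" using assms by (auto simp: s_def q_def)
  have "0 < q + s" using \<open>0 < s\<close> \<open>s < q\<close> by simp
  then have "1 / s - 1 / q = (q - s) * (q + s) / (s * q * (q + s))"
    using \<open>0 < s\<close> \<open>s < q\<close> by (simp add: diff_frac_eq)
  also have "(q - s) * (q + s) = z" using t tz by (simp add: algebra_simps power2_eq_square)
  finally have diff: "1 / sqrt t - 1 / sqrt (t + z) = z / (s * q * (q + s))"
    by (simp add: s_def q_def)
  show "0 < 1 / sqrt t - 1 / sqrt (t + z)"
    unfolding diff using \<open>0 < s\<close> \<open>s < q\<close> assms by simp
  have "s * (s * s) < s * (q * q)" "s * (s * s) < s * (q * s)"
    using \<open>0 < s\<close> \<open>s < q\<close> by (simp_all add: mult_strict_mono)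
  moreover have "2 * s ^ 3 = s * (s * s) + s * (s * s)" "s * q * (q + s) = s * (q * q) + s * (q * s)"
    by (simp_all add: power3_eq_cube algebra_simps)
  ultimately have "2 * s ^ 3 < s * q * (q + s)" by linarith
  then have "z / (s * q * (q + s)) < z / (2 * s ^ 3)"
    using \<open>0 < s\<close> \<open>s < q\<close> assms by (intro divide_strict_left_mono) auto
  also have "2 * s ^ 3 = 2 * t * sqrt t"
    using \<open>0 < s\<close> by (simp add: t s_def[symmetric] power3_eq_cube power2_eq_square)
  finally show "1 / sqrt t - 1 / sqrt (t + z) < z / (2 * t * sqrt t)"
    unfolding diff .
qed

lemma has_integral_inverse_sqrt_mult_add:
  fixes m :: real
  assumes "0 < m"
  shows "((\<lambda>t. 1 / (sqrt t * (t + m))) has_integral pi / sqrt m) {0<..}"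
proof -
  define r where "r = sqrt m"
  have "0 < r" and m: "m = r\<^sup>2" using assms by (auto simp: r_def)
  have "((\<lambda>t. 1 / (sqrt t * (t + m))) has_integral pi / r - 0) {0<..}"
  proof (rule has_integral_greaterThan_0_FTC_nonneg)
    fix t :: real assume "0 < t"
    then show "((\<lambda>t. 2 / r * arctan (sqrt t / r)) has_real_derivative 1 / (sqrt t * (t + m))) (at t)"
      using \<open>0 < r\<close> unfolding m
      by (auto intro!: derivative_eq_intros simp: field_simps power2_eq_square add_nonneg_eq_0_iff)
    show "isCont (\<lambda>t. 1 / (sqrt t * (t + m))) t" "0 \<le> 1 / (sqrt t * (t + m))"
      using \<open>0 < t\<close> assms by (auto intro!: continuous_intros)
  next
    show "((\<lambda>t. 2 / r * arctan (sqrt t / r)) \<longlongrightarrow> 0) (at_right 0)"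
      using \<open>0 < r\<close> by real_asymp
    show "((\<lambda>t. 2 / r * arctan (sqrt t / r)) \<longlongrightarrow> pi / r) at_top"
      using \<open>0 < r\<close> by real_asymp
  qed
  then show ?thesis by (simp add: r_def)
qed

lemma has_integral_inverse_sqrt_mult_quadratic:
  fixes g c :: real
  assumes "0 < g" "0 < c"
  shows "((\<lambda>t. (t + g) / (sqrt t * ((t - g)\<^sup>2 + 4 * c * t))) has_integral pi / sqrt c) {0<..}"
proof -
  define r where "r = sqrt c"
  have "0 < r" and c: "c = r\<^sup>2" using assms by (auto simp: r_def)
  have pos: "0 < (t - g)\<^sup>2 + 4 * c * t" if "0 < t" for t
    using that assms by (simp add: add_nonneg_pos)
  have "((\<lambda>t. (t + g) / (sqrt t * ((t - g)\<^sup>2 + 4 * c * t)))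
      has_integral pi / (2 * r) - (- pi / (2 * r))) {0<..}"
  proof (rule has_integral_greaterThan_0_FTC_nonneg)
    fix t :: real assume "0 < t"
    define D where "D = (t - g)\<^sup>2 + 4 * c * t"
    have "0 < D" using pos[OF \<open>0 < t\<close>] by (simp add: D_def)
    have "((\<lambda>t. (t - g) / (2 * r * sqrt t)) has_real_derivative (t + g) / (4 * r * t * sqrt t)) (at t)"
      using \<open>0 < t\<close> \<open>0 < r\<close>
      by (auto intro!: derivative_eq_intros simp: field_simps power2_eq_square)
    from DERIV_chain2[OF DERIV_arctan this]
    have "((\<lambda>t. arctan ((t - g) / (2 * r * sqrt t)) / r) has_real_derivative
        inverse (1 + ((t - g) / (2 * r * sqrt t))\<^sup>2) * ((t + g) / (4 * r * t * sqrt t)) / r) (at t)"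
      by (rule DERIV_cdivide)
    moreover have "1 + ((t - g) / (2 * r * sqrt t))\<^sup>2 = D / (4 * r\<^sup>2 * t)"
      using \<open>0 < t\<close> \<open>0 < r\<close> by (simp add: D_def c power_divide power_mult_distrib field_simps)
    moreover have
      "inverse (D / (4 * r\<^sup>2 * t)) * ((t + g) / (4 * r * t * sqrt t)) / r = (t + g) / (sqrt t * D)"
      using \<open>0 < t\<close> \<open>0 < r\<close> \<open>0 < D\<close> by (simp add: field_simps power2_eq_square)
    ultimately show "((\<lambda>t. arctan ((t - g) / (2 * r * sqrt t)) / r) has_real_derivative
        (t + g) / (sqrt t * ((t - g)\<^sup>2 + 4 * c * t))) (at t)"
      by (simp add: D_def)
    show "isCont (\<lambda>t. (t + g) / (sqrt t * ((t - g)\<^sup>2 + 4 * c * t))) t"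
      "0 \<le> (t + g) / (sqrt t * ((t - g)\<^sup>2 + 4 * c * t))"
      using \<open>0 < t\<close> assms pos[OF \<open>0 < t\<close>] by (auto intro!: continuous_intros)
  next
    show "((\<lambda>t. arctan ((t - g) / (2 * r * sqrt t)) / r) \<longlongrightarrow> - pi / (2 * r)) (at_right 0)"
      using assms \<open>0 < r\<close> by real_asymp (simp add: field_simps)
    show "((\<lambda>t. arctan ((t - g) / (2 * r * sqrt t)) / r) \<longlongrightarrow> pi / (2 * r)) at_top"
      using assms \<open>0 < r\<close> by real_asymp (simp add: field_simps)
  qed
  then show ?thesis by (simp add: r_def)
qed

(* The integrand is t times the error of the tangent line of 1/sqrt at t, evaluated at t + z. *)
lemma has_integral_sqrt_tangent_gap:
  fixes z :: real
  assumes "0 < z"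
  shows "((\<lambda>t. z / (2 * sqrt t) - sqrt t + t / sqrt (t + z)) has_integral 4 / 3 * z * sqrt z) {0<..}"
proof -
  let ?F = "\<lambda>t. z * sqrt t - 2 / 3 * t * sqrt t + 2 / 3 * (t + z) * sqrt (t + z) - 2 * z * sqrt (t + z)"
  have "((\<lambda>t. z / (2 * sqrt t) - sqrt t + t / sqrt (t + z)) has_integral
      0 - (2 / 3 * z * sqrt z - 2 * z * sqrt z)) {0<..}"
  proof (rule has_integral_greaterThan_0_FTC_nonneg[where F = ?F])
    fix t :: real assume "0 < t"
    define s q where "s = sqrt t" and "q = sqrt (t + z)"
    have "0 < s" "0 < q" "sqrt t = s" "sqrt (t + z) = q" "t = s\<^sup>2" and z: "z = q\<^sup>2 - s\<^sup>2"
      using \<open>0 < t\<close> assms by (auto simp: s_def q_def)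
    then show "(?F has_real_derivative z / (2 * sqrt t) - sqrt t + t / sqrt (t + z)) (at t)"
      by (auto intro!: derivative_eq_intros simp: field_simps; simp add: z power2_eq_square algebra_simps)
    show "isCont (\<lambda>t. z / (2 * sqrt t) - sqrt t + t / sqrt (t + z)) t"
      using \<open>0 < t\<close> assms by (auto intro!: continuous_intros)
    have "0 \<le> t * (z / (2 * t * sqrt t) - (1 / sqrt t - 1 / sqrt (t + z)))"
      using inverse_sqrt_diff_bounds(2)[OF \<open>0 < t\<close> assms] \<open>0 < t\<close> by simp
    also have "\<dots> = z / (2 * sqrt t) - sqrt t + t / sqrt (t + z)"
      using \<open>0 < t\<close> by (simp add: field_simps)
    finally show "0 \<le> z / (2 * sqrt t) - sqrt t + t / sqrt (t + z)" .
  next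
    show "(?F \<longlongrightarrow> 2 / 3 * z * sqrt z - 2 * z * sqrt z) (at_right 0)"
      using assms by real_asymp (simp add: powr_half_sqrt)
    show "(?F \<longlongrightarrow> 0) at_top"
      using assms by real_asymp
  qed
  then show ?thesis by (simp add: mult.assoc)
qed

definition RG_integrand :: "real \<Rightarrow> real \<Rightarrow> real \<Rightarrow> real \<Rightarrow> real" where
  "RG_integrand x y w t = (x / (t + x) + y / (t + y) + w / (t + w)) * t / sqrt ((t + x) * (t + y) * (t + w))"

lemma R_G_eq_integral_RG_integrand:
  assumes "0 \<le> x" "0 \<le> y" "0 \<le> w"
  shows "R_G x y w = integral {0<..} (RG_integrand x y w) / 4"
proof -
  have "integral {0<..} (\<lambda>t. ((t + x) * (t + y) * (t + w)) powr (-1/2)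
          * (x / (t + x) + y / (t + y) + w / (t + w)) * t)
      = integral {0<..} (RG_integrand x y w)"
    using assms by (intro integral_cong)
      (simp add: RG_integrand_def powr_minus_divide powr_half_sqrt add_pos_nonneg)
  then show ?thesis by (simp add: R_G_def)
qed

lemma has_real_derivative_RG_primitive:
  assumes "0 \<le> x" "0 \<le> y" "0 \<le> w" "0 < t"
  shows "((\<lambda>t. 2 * t\<^sup>2 / sqrt ((t + x) * (t + y) * (t + w))) has_real_derivative
    RG_integrand x y w t + t / sqrt ((t + x) * (t + y) * (t + w))) (at t)"
proof -
  define r where "r = sqrt ((t + x) * (t + y) * (t + w))"
  define S where "S = 1 / (t + x) + 1 / (t + y) + 1 / (t + w)"
  have "0 < t + x" "0 < t + y" "0 < t + w" using assms by auto
  then have "0 < r" and Q: "(t + x) * (t + y) * (t + w) = r\<^sup>2" by (auto simp: r_def)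
  have "p * q * u * (1 / p + 1 / q + 1 / u) = q * u + p * u + p * q"
    if "p \<noteq> 0" "q \<noteq> 0" "u \<noteq> 0" for p q u :: real
    using that by (simp add: distrib_left)
  from this[of "t + x" "t + y" "t + w"]
  have "(t + y) * (t + w) + (t + x) * (t + w) + (t + x) * (t + y) = r\<^sup>2 * S"
    unfolding Q[symmetric] S_def using \<open>0 < t + x\<close> \<open>0 < t + y\<close> \<open>0 < t + w\<close> by simp
  then have "((\<lambda>t. (t + x) * (t + y) * (t + w)) has_real_derivative r\<^sup>2 * S) (at t)"
    by (auto intro!: derivative_eq_intros simp: algebra_simps)
  from DERIV_chain2[OF DERIV_real_sqrt this]
  have dsqrt: "((\<lambda>t. sqrt ((t + x) * (t + y) * (t + w))) has_real_derivative r * S / 2) (at t)"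
    using \<open>0 < r\<close> Q by (simp add: r_def[symmetric] power2_eq_square field_simps)
  have "((\<lambda>t. 2 * t\<^sup>2) has_real_derivative 4 * t) (at t)"
    by (auto intro!: derivative_eq_intros)
  from DERIV_divide[OF this dsqrt, unfolded r_def[symmetric]]
  have "((\<lambda>t. 2 * t\<^sup>2 / sqrt ((t + x) * (t + y) * (t + w))) has_real_derivative
      (4 * t * r - 2 * t\<^sup>2 * (r * S / 2)) / (r * r)) (at t)"
    using \<open>0 < r\<close> by simp
  also have "(4 * t * r - 2 * t\<^sup>2 * (r * S / 2)) / (r * r) = t * (4 - t * S) / r"
    using \<open>0 < r\<close> by (simp add: field_simps power2_eq_square)
  also have "t * (4 - t * S) = (x / (t + x) + y / (t + y) + w / (t + w)) * t + t"
  proof -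
    have split: "t * t / (t + p) + t * p / (t + p) = t" if "0 < t + p" for p
      using that by (simp flip: add_divide_distrib distrib_left)
    show ?thesis
      using split[OF \<open>0 < t + x\<close>] split[OF \<open>0 < t + y\<close>] split[OF \<open>0 < t + w\<close>]
      by (simp add: S_def algebra_simps)
  qed
  finally show ?thesis
    unfolding RG_integrand_def r_def[symmetric] by (simp add: add_divide_distrib)
qed

lemma continuous_on_RG_integrand:
  assumes "0 \<le> x" "0 \<le> y" "0 \<le> w"
  shows "continuous_on {0<..} (RG_integrand x y w)"
  unfolding RG_integrand_def using assms by (intro continuous_intros) auto

lemma RG_integrand_bounds:
  assumes "0 < x" "0 < y" "0 \<le> w" "0 < t"
  shows "0 \<le> RG_integrand x y w t" "RG_integrand x y w t \<le> (x + y + w) * (1 / (sqrt t * (t + min x y)))"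
proof -
  have "x / (t + x) * t \<le> x" "y / (t + y) * t \<le> y" "w / (t + w) * t \<le> w"
    using assms by (simp_all add: field_simps)
  then have num: "0 \<le> (x / (t + x) + y / (t + y) + w / (t + w)) * t"
    "(x / (t + x) + y / (t + y) + w / (t + w)) * t \<le> x + y + w"
    using assms by (simp_all add: distrib_right)
  have "(t + min x y) * (t + min x y) \<le> (t + x) * (t + y)"
    using assms by (intro mult_mono) auto
  then have "t + min x y \<le> sqrt ((t + x) * (t + y))"
    by (intro real_le_rsqrt) (simp add: power2_eq_square)
  moreover have "sqrt t \<le> sqrt (t + w)" using assms by simp
  ultimately have "sqrt t * (t + min x y) \<le> sqrt ((t + x) * (t + y) * (t + w))"
    using assms by (simp add: real_sqrt_mult mult_mono mult.commute)
  then show "0 \<le> RG_integrand x y w t" "RG_integrand x y w t \<le> (x + y + w) * (1 / (sqrt t * (t + min x y)))"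
    using num assms unfolding RG_integrand_def by (auto intro!: frac_le)
qed

lemma RG_integrand_integrable:
  assumes "0 < x" "0 < y" "0 \<le> w"
  shows "RG_integrand x y w integrable_on {0<..}"
proof (rule continuous_on_dominated_integrable_on)
  show "(\<lambda>t. (x + y + w) * (1 / (sqrt t * (t + min x y)))) integrable_on {0<..}"
    using has_integral_mult_right[OF has_integral_inverse_sqrt_mult_add, of "min x y" "x + y + w"] assms
    by (auto intro: has_integral_integrable)
qed (use assms RG_integrand_bounds continuous_on_RG_integrand in auto)

definition RG_diff_kernel :: "real \<Rightarrow> real \<Rightarrow> real \<Rightarrow> real \<Rightarrow> real" where
  "RG_diff_kernel a g z t = t / sqrt (t\<^sup>2 + 2 * a * t + g\<^sup>2) * (1 / sqrt t - 1 / sqrt (t + z))"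

lemma continuous_on_RG_diff_kernel:
  assumes "0 \<le> a" "0 \<le> z"
  shows "continuous_on {0<..} (RG_diff_kernel a g z)"
proof -
  have "0 < t\<^sup>2 + 2 * a * t + g\<^sup>2" if "0 < t" for t
    using that assms by (simp add: add_pos_nonneg)
  then show ?thesis
    unfolding RG_diff_kernel_def[abs_def] using assms
    by (intro continuous_intros) (auto dest: less_imp_neq[symmetric])
qed

lemma RG_diff_kernel_nonneg:
  assumes "0 \<le> a" "0 < z" "0 < t"
  shows "0 \<le> RG_diff_kernel a g z t"
  using inverse_sqrt_diff_bounds(1)[OF assms(3,2)] assms
  by (simp add: RG_diff_kernel_def add_nonneg_nonneg)

(* With E = (t - g)^2 and m = (a + g)/2 one has t^2 + 2at + g^2 = E + 4mt and (t + g)^2 = E + 4gt. Since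
   c^2 = m g, the claim says E + 4ct is at most the geometric mean of the two, which follows from 2c <= m + g. *)
lemma sqrt_quadratic_lower_bound:
  fixes a g t :: real
  assumes "0 < g" "g \<le> a" "0 \<le> t"
  shows "(t - g)\<^sup>2 + 4 * sqrt ((a * g + g\<^sup>2) / 2) * t \<le> (t + g) * sqrt (t\<^sup>2 + 2 * a * t + g\<^sup>2)"
proof -
  define c m E where "c = sqrt ((a * g + g\<^sup>2) / 2)" and "m = (a + g) / 2" and "E = (t - g)\<^sup>2"
  have "0 \<le> E" by (simp add: E_def)
  have c2: "c\<^sup>2 = m * g" using assms by (simp add: c_def m_def power2_eq_square algebra_simps)
  have "(m + g)\<^sup>2 - (2 * c)\<^sup>2 = (m - g)\<^sup>2"
    using c2 by (simp add: power2_eq_square algebra_simps)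
  then have "(2 * c)\<^sup>2 \<le> (m + g)\<^sup>2"
    using zero_le_power2[of "m - g"] by linarith
  moreover have "0 \<le> m + g" using assms by (simp add: m_def)
  ultimately have "2 * c \<le> m + g" by (rule power2_le_imp_le)
  have "(E + 4 * m * t) * (E + 4 * g * t) - (E + 4 * c * t)\<^sup>2
      = 4 * t * E * (m + g - 2 * c) + 16 * t\<^sup>2 * (m * g - c\<^sup>2)"
    by (simp add: power2_eq_square algebra_simps)
  also have "\<dots> \<ge> 0"
    using c2 \<open>2 * c \<le> m + g\<close> \<open>0 \<le> E\<close> assms by simp
  finally have "(E + 4 * c * t)\<^sup>2 \<le> (E + 4 * m * t) * (E + 4 * g * t)" by simp
  then have "E + 4 * c * t \<le> sqrt ((E + 4 * m * t) * (E + 4 * g * t))"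
    by (rule real_le_rsqrt)
  also have "(E + 4 * m * t) * (E + 4 * g * t) = (t\<^sup>2 + 2 * a * t + g\<^sup>2) * (t + g)\<^sup>2"
    by (simp add: E_def m_def power2_eq_square algebra_simps)
  finally show ?thesis
    using assms by (simp add: E_def c_def real_sqrt_mult mult.commute)
qed

lemma RG_diff_kernel_upper_bound:
  fixes a g z t :: real
  assumes "0 < g" "g \<le> a" "0 < z" "0 < t"
  shows "RG_diff_kernel a g z t < z / 2 * ((t + g) / (sqrt t * ((t - g)\<^sup>2 + 4 * sqrt ((a * g + g\<^sup>2) / 2) * t)))"
proof -
  define P D where "P = sqrt (t\<^sup>2 + 2 * a * t + g\<^sup>2)"
    and "D = (t - g)\<^sup>2 + 4 * sqrt ((a * g + g\<^sup>2) / 2) * t"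
  have "0 < P" using assms by (simp add: P_def add_pos_nonneg)
  have "0 < D" using assms by (simp add: D_def add_nonneg_pos)
  have "RG_diff_kernel a g z t < t / P * (z / (2 * t * sqrt t))"
    unfolding RG_diff_kernel_def P_def[symmetric]
    using inverse_sqrt_diff_bounds(2)[OF \<open>0 < t\<close> \<open>0 < z\<close>] \<open>0 < P\<close> \<open>0 < t\<close>
    by (intro mult_strict_left_mono) auto
  also have "\<dots> = z / 2 * (1 / (sqrt t * P))"
    using \<open>0 < t\<close> by (simp add: field_simps)
  also have "1 / P \<le> (t + g) / D"
    using sqrt_quadratic_lower_bound[of g a t] assms \<open>0 < P\<close> \<open>0 < D\<close>
    by (simp add: P_def D_def divide_simps mult.commute)
  then have "1 / P / sqrt t \<le> (t + g) / D / sqrt t"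
    by (rule divide_right_mono) (use assms in simp)
  then have "z / 2 * (1 / (sqrt t * P)) \<le> z / 2 * ((t + g) / (sqrt t * D))"
    using assms by (intro mult_left_mono) (simp_all add: mult.commute)
  finally show ?thesis by (simp add: D_def)
qed

lemma RG_diff_kernel_lower_bound:
  fixes a g z t :: real
  assumes "0 < g" "g \<le> a" "0 < z" "0 < t"
  shows "z / 2 * (1 / (sqrt t * (t + a))) - (z / (2 * sqrt t) - sqrt t + t / sqrt (t + z)) / a
    \<le> RG_diff_kernel a g z t"
proof -
  define d e where "d = 1 / sqrt t - 1 / sqrt (t + z)" and "e = z / (2 * t * sqrt t)"
  have "0 < d" "d < e" using inverse_sqrt_diff_bounds[OF \<open>0 < t\<close> \<open>0 < z\<close>] by (simp_all add: d_def e_def)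
  have "0 < a" using assms by simp
  have "t\<^sup>2 + 2 * a * t + g\<^sup>2 \<le> (t + a)\<^sup>2"
    using assms by (simp add: power2_eq_square algebra_simps mult_mono)
  from real_sqrt_le_mono[OF this] have P: "sqrt (t\<^sup>2 + 2 * a * t + g\<^sup>2) \<le> t + a"
    using assms by simp
  have "t * e = z / (2 * sqrt t)" "t * d = sqrt t - t / sqrt (t + z)"
    using assms by (simp_all add: d_def e_def real_div_sqrt right_diff_distrib)
  then have "z / 2 * (1 / (sqrt t * (t + a))) - (z / (2 * sqrt t) - sqrt t + t / sqrt (t + z)) / a
      = t * e / (t + a) - t * (e - d) / a"
    by (simp add: right_diff_distrib diff_divide_distrib add_divide_distrib mult.assoc)
  also have "\<dots> \<le> t * e / (t + a) - t * (e - d) / (t + a)"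
    using \<open>d < e\<close> \<open>0 < a\<close> assms by (intro diff_left_mono divide_left_mono) auto
  also have "\<dots> = t * d / (t + a)"
    by (simp add: diff_divide_distrib[symmetric] right_diff_distrib)
  also have "\<dots> \<le> t * d / sqrt (t\<^sup>2 + 2 * a * t + g\<^sup>2)"
    using P \<open>0 < d\<close> assms by (intro divide_left_mono) (auto simp: add_pos_nonneg)
  finally show ?thesis by (simp add: RG_diff_kernel_def d_def)
qed

lemma RG_diff_kernel_integrable:
  assumes "0 < g" "g \<le> a" "0 < z"
  shows "RG_diff_kernel a g z integrable_on {0<..}"
proof (rule continuous_on_dominated_integrable_on)
  define c where "c = sqrt ((a * g + g\<^sup>2) / 2)"
  have "0 < c" using assms by (simp add: c_def add_pos_pos)
  then show "(\<lambda>t. z / 2 * ((t + g) / (sqrt t * ((t - g)\<^sup>2 + 4 * c * t)))) integrable_on {0<..}"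
    using has_integral_mult_right[OF has_integral_inverse_sqrt_mult_quadratic, of g c "z / 2"] assms
    by (auto intro: has_integral_integrable)
  show "\<bar>RG_diff_kernel a g z t\<bar> \<le> z / 2 * ((t + g) / (sqrt t * ((t - g)\<^sup>2 + 4 * c * t)))"
    if "t \<in> {0<..}" for t
    using that RG_diff_kernel_nonneg[of a z t] RG_diff_kernel_upper_bound[of g a z t] assms
    by (simp add: c_def)
qed (use assms continuous_on_RG_diff_kernel in auto)

lemma RG_diff_kernel_eq:
  assumes "0 \<le> x" "0 \<le> y"
  shows "RG_diff_kernel ((x + y) / 2) (sqrt (x * y)) z t
    = t / sqrt ((t + x) * (t + y) * t) - t / sqrt ((t + x) * (t + y) * (t + z))"
proof -
  have "(t + x) * (t + y) = t\<^sup>2 + 2 * ((x + y) / 2) * t + (sqrt (x * y))\<^sup>2"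
    using assms by (simp add: power2_eq_square algebra_simps)
  then show ?thesis
    by (simp add: RG_diff_kernel_def real_sqrt_mult right_diff_distrib)
qed

lemma has_integral_RG_integrand_diff_sub_RG_diff_kernel:
  fixes x y z :: real
  assumes "0 < x" "0 < y" "0 < z"
  defines "k \<equiv> RG_diff_kernel ((x + y) / 2) (sqrt (x * y)) z"
  shows "((\<lambda>t. RG_integrand x y z t - RG_integrand x y 0 t - k t) has_integral 0) {0<..}"
proof -
  define a g where "a = (x + y) / 2" and "g = sqrt (x * y)"
  have "0 < g" "g \<le> a"
    using assms arith_geo_mean_sqrt[of x y] by (auto simp: a_def g_def)
  define B where "B = (\<lambda>t. 2 * t\<^sup>2 / sqrt ((t + x) * (t + y) * (t + z))
    - 2 * t\<^sup>2 / sqrt ((t + x) * (t + y) * (t + 0)))"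
  have "((\<lambda>t. RG_integrand x y z t - RG_integrand x y 0 t - k t) has_integral 0 - 0) {0<..}"
  proof (rule has_integral_greaterThan_0_FTC_integrable[where F = B])
    fix t :: real assume "0 < t"
    have "(B has_real_derivative
        (RG_integrand x y z t + t / sqrt ((t + x) * (t + y) * (t + z)))
        - (RG_integrand x y 0 t + t / sqrt ((t + x) * (t + y) * (t + 0)))) (at t)"
      unfolding B_def using assms \<open>0 < t\<close> by (intro DERIV_diff has_real_derivative_RG_primitive) auto
    also have "(RG_integrand x y z t + t / sqrt ((t + x) * (t + y) * (t + z)))
        - (RG_integrand x y 0 t + t / sqrt ((t + x) * (t + y) * (t + 0)))
        = RG_integrand x y z t - RG_integrand x y 0 t - k t"
      unfolding k_def RG_diff_kernel_eq[OF less_imp_le less_imp_le, OF assms(1,2)] by simp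
    finally show "(B has_real_derivative RG_integrand x y z t - RG_integrand x y 0 t - k t) (at t)" .
  next
    show "continuous_on {0<..} (\<lambda>t. RG_integrand x y z t - RG_integrand x y 0 t - k t)"
      using continuous_on_RG_integrand[of x y z] continuous_on_RG_integrand[of x y 0]
        continuous_on_RG_diff_kernel[of a z g] \<open>g \<le> a\<close> \<open>0 < g\<close> assms
      unfolding k_def a_def g_def by (intro continuous_intros) auto
    show "(\<lambda>t. RG_integrand x y z t - RG_integrand x y 0 t - k t) absolutely_integrable_on {0<..}"
      using RG_integrand_integrable[of x y z] RG_integrand_integrable[of x y 0]
        RG_diff_kernel_integrable[OF \<open>0 < g\<close> \<open>g \<le> a\<close> \<open>0 < z\<close>]
        RG_integrand_bounds(1)[of x y] RG_diff_kernel_nonneg[of a z] \<open>g \<le> a\<close> \<open>0 < g\<close> assms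
      unfolding k_def a_def g_def by (intro set_integral_diff(1) nonnegative_absolutely_integrable_1) auto
    \<comment> \<open>Each primitive grows like 2 sqrt t at infinity; only their difference vanishes there.\<close>
    show "(B \<longlongrightarrow> 0) (at_right 0)" "(B \<longlongrightarrow> 0) at_top"
      unfolding B_def using assms by real_asymp+
  qed
  then show ?thesis by simp
qed

lemma has_integral_RG_diff_kernel:
  fixes x y z :: real
  assumes "0 < x" "0 < y" "0 < z"
  shows "(RG_diff_kernel ((x + y) / 2) (sqrt (x * y)) z has_integral 4 * (R_G x y z - R_G x y 0)) {0<..}"
proof -
  define k where "k = RG_diff_kernel ((x + y) / 2) (sqrt (x * y)) z"
  have "k integrable_on {0<..}"
    using RG_diff_kernel_integrable[of "sqrt (x * y)" "(x + y) / 2" z] arith_geo_mean_sqrt[of x y] assms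
    by (simp add: k_def)
  moreover have "((\<lambda>t. RG_integrand x y z t - RG_integrand x y 0 t - k t) has_integral
      integral {0<..} (RG_integrand x y z) - integral {0<..} (RG_integrand x y 0) - integral {0<..} k) {0<..}"
    using RG_integrand_integrable[of x y z] RG_integrand_integrable[of x y 0] \<open>k integrable_on {0<..}\<close> assms
    by (intro has_integral_diff integrable_integral) auto
  ultimately show ?thesis
    using has_integral_RG_integrand_diff_sub_RG_diff_kernel[OF assms] has_integral_unique assms
    by (fastforce simp: R_G_eq_integral_RG_integrand has_integral_iff k_def)
qed

lemma RG_diff_kernel_integral_bounds:
  fixes a g z I :: real
  assumes "0 < g" "g \<le> a" "0 < z" and I: "(RG_diff_kernel a g z has_integral I) {0<..}"
  shows "z * pi / (2 * sqrt a) - 4 / 3 * z * sqrt z / a \<le> I"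
    and "I < z * pi / (2 * sqrt (sqrt ((a * g + g\<^sup>2) / 2)))"
proof -
  define c where "c = sqrt ((a * g + g\<^sup>2) / 2)"
  have "0 < a" "0 < c" using assms by (auto simp: c_def add_pos_pos)
  have "((\<lambda>t. z / 2 * (1 / (sqrt t * (t + a))) - (z / (2 * sqrt t) - sqrt t + t / sqrt (t + z)) / a)
      has_integral z / 2 * (pi / sqrt a) - 4 / 3 * z * sqrt z / a) {0<..}"
    using assms \<open>0 < a\<close>
    by (intro has_integral_diff has_integral_mult_right has_integral_divide
        has_integral_inverse_sqrt_mult_add has_integral_sqrt_tangent_gap)
  then show "z * pi / (2 * sqrt a) - 4 / 3 * z * sqrt z / a \<le> I"
    using RG_diff_kernel_lower_bound[OF assms(1-3)] by (intro has_integral_le[OF _ I]) auto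
  have "0 < (t - g)\<^sup>2 + 4 * c * t" if "0 < t" for t
    using that \<open>0 < c\<close> by (simp add: add_nonneg_pos)
  then have "continuous_on {0<..} (\<lambda>t. z / 2 * ((t + g) / (sqrt t * ((t - g)\<^sup>2 + 4 * c * t))))"
    by (intro continuous_intros) (auto dest: less_imp_neq[symmetric])
  moreover have "((\<lambda>t. z / 2 * ((t + g) / (sqrt t * ((t - g)\<^sup>2 + 4 * c * t))))
      has_integral z / 2 * (pi / sqrt c)) {0<..}"
    using assms \<open>0 < c\<close> by (intro has_integral_mult_right has_integral_inverse_sqrt_mult_quadratic)
  ultimately show "I < z * pi / (2 * sqrt c)"
    using RG_diff_kernel_upper_bound[OF assms(1-3)] continuous_on_RG_diff_kernel[of a z g] assms
    by (intro has_integral_strict_mono_greaterThan_0[OF I]) (auto simp: c_def)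
qed

lemma powr_quarter_eq_inverse_sqrt_sqrt:
  fixes q :: real
  assumes "0 < q"
  shows "(1 / q) powr (1/4) = 1 / sqrt (sqrt q)"
proof -
  have "sqrt (sqrt q) = (q powr (1/2)) powr (1/2)"
    using assms by (simp add: powr_half_sqrt)
  also have "\<dots> = q powr (1/4)" by (simp add: powr_powr)
  finally show ?thesis using assms by (simp add: powr_divide)
qed

lemma RG_diff_kernel_theta_bounds:
  fixes a g z I :: real
  assumes "0 < g" "g \<le> a" "0 < z" and I: "(RG_diff_kernel a g z has_integral I) {0<..}"
  shows "1 / sqrt a * (1 - 4 / pi * sqrt (z / a)) < 2 * I / (pi * z)"
    and "2 * I / (pi * z) < (2 / (a * g + g\<^sup>2)) powr (1/4)"
proof -
  have "0 < a" using assms by simp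
  define r where "r = sqrt a"
  have "0 < r" and a: "a = r * r" using \<open>0 < a\<close> by (auto simp: r_def)
  have "1 / sqrt a * (1 - 4 / pi * sqrt (z / a)) < 2 / (pi * z) * (z * pi / (2 * sqrt a) - 4 / 3 * z * sqrt z / a)"
    using \<open>0 < r\<close> \<open>0 < z\<close> unfolding a by (simp add: real_sqrt_divide field_simps)
  also have "\<dots> \<le> 2 / (pi * z) * I"
    using RG_diff_kernel_integral_bounds(1)[OF assms] \<open>0 < z\<close> by (intro mult_left_mono) auto
  finally show "1 / sqrt a * (1 - 4 / pi * sqrt (z / a)) < 2 * I / (pi * z)" by simp
  have "2 / (pi * z) * I < 2 / (pi * z) * (z * pi / (2 * sqrt (sqrt ((a * g + g\<^sup>2) / 2))))"
    using RG_diff_kernel_integral_bounds(2)[OF assms] \<open>0 < z\<close> by (intro mult_strict_left_mono) auto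
  also have "\<dots> = (2 / (a * g + g\<^sup>2)) powr (1/4)"
    using powr_quarter_eq_inverse_sqrt_sqrt[of "(a * g + g\<^sup>2) / 2"] assms by (simp add: add_pos_pos)
  finally show "2 * I / (pi * z) < (2 / (a * g + g\<^sup>2)) powr (1/4)" by simp
qed

lemma powr_quarter_le_inverse_sqrt:
  fixes a g :: real
  assumes "0 < g" "g \<le> a"
  shows "(2 / (a * g + g\<^sup>2)) powr (1/4) \<le> 1 / sqrt g"
    and "(2 / (a * g + g\<^sup>2)) powr (1/4) = 1 / sqrt g \<longleftrightarrow> a = g"
proof -
  define q where "q = (a * g + g\<^sup>2) / 2"
  have "0 < q" using assms by (simp add: q_def add_pos_pos)
  have U: "(2 / (a * g + g\<^sup>2)) powr (1/4) = 1 / sqrt (sqrt q)"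
    using powr_quarter_eq_inverse_sqrt_sqrt[OF \<open>0 < q\<close>] by (simp add: q_def)
  have g: "sqrt g = sqrt (sqrt (g\<^sup>2))" using assms by simp
  have "q - g\<^sup>2 = g * (a - g) / 2" by (simp add: q_def power2_eq_square algebra_simps)
  moreover have "0 \<le> g * (a - g)" "g * (a - g) = 0 \<longleftrightarrow> a = g" using assms by auto
  ultimately have "g\<^sup>2 \<le> q" and "q = g\<^sup>2 \<longleftrightarrow> a = g" by auto
  then have "sqrt (sqrt (g\<^sup>2)) \<le> sqrt (sqrt q)" and "sqrt (sqrt q) = sqrt (sqrt (g\<^sup>2)) \<longleftrightarrow> a = g"
    by (simp_all only: real_sqrt_le_iff real_sqrt_eq_iff)
  then show "(2 / (a * g + g\<^sup>2)) powr (1/4) \<le> 1 / sqrt g"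
    and "(2 / (a * g + g\<^sup>2)) powr (1/4) = 1 / sqrt g \<longleftrightarrow> a = g"
    unfolding U g using assms \<open>0 < q\<close> by (auto intro!: divide_left_mono)
qed

lemma sqrt_mult_eq_mean_iff:
  fixes x y :: real
  assumes "0 \<le> x" "0 \<le> y"
  shows "sqrt (x * y) = (x + y) / 2 \<longleftrightarrow> x = y"
proof
  assume "sqrt (x * y) = (x + y) / 2"
  then have "((x + y) / 2)\<^sup>2 = x * y" using assms by (metis real_sqrt_pow2 zero_le_mult_iff)
  moreover have "(x - y)\<^sup>2 = 4 * (((x + y) / 2)\<^sup>2 - x * y)" by (simp add: power2_eq_square algebra_simps)
  ultimately show "x = y" by simp
qed (use assms in simp)

theorem mainTheorem17:
  fixes x y z :: real
  assumes "x > 0" and "y > 0" and "z > 0"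
  defines "a \<equiv> (x + y) / 2" and "g \<equiv> sqrt (x * y)"
  shows "(\<exists>\<theta>. R_G x y z = R_G x y 0 + pi * \<theta> * z / 8
              \<and> 1 / sqrt a * (1 - 4 / pi * sqrt (z / a)) < \<theta>
              \<and> \<theta> < (2 / (a * g + g^2)) powr (1/4))
         \<and> (2 / (a * g + g^2)) powr (1/4) \<le> 1 / sqrt g
         \<and> ((2 / (a * g + g^2)) powr (1/4) = 1 / sqrt g \<longleftrightarrow> x = y)"
proof -
  have "0 < g" "g \<le> a" and "a = g \<longleftrightarrow> x = y"
    using assms arith_geo_mean_sqrt[of x y] sqrt_mult_eq_mean_iff[of x y] by (auto simp: a_def g_def)
  have I: "(RG_diff_kernel a g z has_integral 4 * (R_G x y z - R_G x y 0)) {0<..}"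
    unfolding a_def g_def using has_integral_RG_diff_kernel[OF assms(1-3)] .
  define \<theta> where "\<theta> = 2 * (4 * (R_G x y z - R_G x y 0)) / (pi * z)"
  have "R_G x y z = R_G x y 0 + pi * \<theta> * z / 8"
    using \<open>0 < z\<close> by (simp add: \<theta>_def field_simps)
  then show ?thesis
    using RG_diff_kernel_theta_bounds[OF \<open>0 < g\<close> \<open>g \<le> a\<close> \<open>0 < z\<close> I]
      powr_quarter_le_inverse_sqrt[OF \<open>0 < g\<close> \<open>g \<le> a\<close>] \<open>a = g \<longleftrightarrow> x = y\<close>
    unfolding \<theta>_def by blast
qed

end
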